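(* Let $K$ be an algebraically closed field of characteristic zero, $\Phi=(f_1,\dots,f_n)$ a polynomial automorphism of $K^n$ with jacobian $\lambda\in K^*$, and $\Phi^{-1}=(g_1,\dots,g_n)$. For $i=1,\dots,n$ define derivations $\delta_i(P)=\lambda^{-1}\frac{\partial P}{\partial x_i}$ and $\Delta_i(P)=\mathrm{j}(g_1,\dots,g_{i-1},P,g_{i+1},\dots,g_n)$ on $K[x_1,\dots,x_n]$. Then for every $i$ and every $P$, $\Delta_i(P\circ\Phi^{-1})=\delta_i(P)\circ\Phi^{-1}$ and $\Delta_i(P)\circ\Phi=\delta_i(P\circ\Phi)$. Moreover every $\Delta_i$ is locally nilpotent.
   Context: $\mathrm{j}(P_1,\dots,P_n)=\det(\partial P_i/\partial x_j)_{1\le i,j\le n}$ is the jacobian determinant. *)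

theory Defs
  imports "HOL-Library.Poly_Mapping" "HOL-Combinatorics.Permutations"
          "HOL-Computational_Algebra.Polynomial"
begin

text \<open>Multivariate polynomials over 'a in the variables x_0, x_1, ... :
  finitely supported maps from monomials (exponent vectors) to coefficients.
  The paper's x_1..x_n are our x_0..x_(n-1).\<close>
type_synonym 'a mpoly = "(nat \<Rightarrow>\<^sub>0 nat) \<Rightarrow>\<^sub>0 'a"

definition mConst :: "'a::zero \<Rightarrow> 'a mpoly" where
  "mConst c = Poly_Mapping.single 0 c"

definition mVar :: "nat \<Rightarrow> 'a::{zero,one} mpoly" where
  "mVar i = Poly_Mapping.single (Poly_Mapping.single i 1) 1"

definition in_ring :: "nat \<Rightarrow> 'a::zero mpoly \<Rightarrow> bool" where
  "in_ring n p \<longleftrightarrow> (\<forall>m\<in>Poly_Mapping.keys p. Poly_Mapping.keys m \<subseteq> {..<n})"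

definition mpderiv :: "nat \<Rightarrow> 'a::comm_ring_1 mpoly \<Rightarrow> 'a mpoly" where
  "mpderiv i p = (\<Sum>m\<in>Poly_Mapping.keys p.
      Poly_Mapping.single (m - Poly_Mapping.single i 1)
        (of_nat (Poly_Mapping.lookup m i) * Poly_Mapping.lookup p m))"

definition msubst :: "(nat \<Rightarrow> 'a::comm_ring_1 mpoly) \<Rightarrow> 'a mpoly \<Rightarrow> 'a mpoly" where
  "msubst s p = (\<Sum>m\<in>Poly_Mapping.keys p.
      mConst (Poly_Mapping.lookup p m) *
      (\<Prod>v\<in>Poly_Mapping.keys m. s v ^ Poly_Mapping.lookup m v))"

definition mdet :: "nat \<Rightarrow> (nat \<Rightarrow> nat \<Rightarrow> 'a::comm_ring_1) \<Rightarrow> 'a" where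
  "mdet n M = (\<Sum>\<pi> | \<pi> permutes {..<n}. of_int (sign \<pi>) * (\<Prod>i<n. M i (\<pi> i)))"

definition jac :: "nat \<Rightarrow> (nat \<Rightarrow> 'a::comm_ring_1 mpoly) \<Rightarrow> 'a mpoly" where
  "jac n F = mdet n (\<lambda>i j. mpderiv j (F i))"

definition poly_aut_inv :: "nat \<Rightarrow> (nat \<Rightarrow> 'a::comm_ring_1 mpoly) \<Rightarrow> (nat \<Rightarrow> 'a mpoly) \<Rightarrow> bool" where
  "poly_aut_inv n F G \<longleftrightarrow>
     (\<forall>i<n. in_ring n (F i) \<and> in_ring n (G i)) \<and>
     (\<forall>i<n. msubst F (G i) = mVar i) \<and>
     (\<forall>i<n. msubst G (F i) = mVar i)"

definition alg_closed :: "'a::field itself \<Rightarrow> bool" where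
  "alg_closed _ \<longleftrightarrow> (\<forall>p::'a poly. Polynomial.degree p > 0 \<longrightarrow> (\<exists>x. poly p x = 0))"

end

theory Submission
  imports Defs "Jordan_Normal_Form.Determinant"
begin

text \<open>
  By the chain rule, replacing the \<open>i\<close>-th component of \<open>G\<close> by \<open>P \<circ> G\<close> replaces the \<open>i\<close>-th row
  of the Jacobian matrix of \<open>G\<close> by a combination of all its rows with coefficients
  \<open>\<partial>P/\<partial>x\<^sub>k \<circ> G\<close>; as the determinant is alternating only the term \<open>k = i\<close> survives, so
  \<open>j(G(i := P \<circ> G)) = (\<partial>P/\<partial>x\<^sub>i \<circ> G) \<cdot> j(G)\<close>. Multiplicativity of the Jacobian applied to
  \<open>\<Phi> \<circ> \<Phi>\<^sup>-\<^sup>1 = id\<close> gives \<open>j(\<Phi>\<^sup>-\<^sup>1) = \<lambda>\<^sup>-\<^sup>1\<close>, and taking \<open>G = \<Phi>\<^sup>-\<^sup>1\<close> yields the conjugation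
  formulas. Conjugated by \<open>\<Phi>\<close>, the derivation \<open>\<Delta>\<^sub>i\<close> becomes \<open>\<lambda>\<^sup>-\<^sup>1 \<partial>/\<partial>x\<^sub>i\<close>, which is locally
  nilpotent since it lowers the degree in \<open>x\<^sub>i\<close>.
\<close>

lemma funpow_conj:
  assumes "\<And>x. x \<in> A \<Longrightarrow> g x \<in> A" "\<And>x. x \<in> A \<Longrightarrow> f (h x) = h (g x)" "x \<in> A"
  shows "(f ^^ k) (h x) = h ((g ^^ k) x)"
proof -
  have "(g ^^ k) x \<in> A" for k
    by (induction k) (simp_all add: assms)
  then show ?thesis
    by (induction k) (simp_all add: assms)
qed

lemma poly_mapping_sum_single:
  "(p::'a \<Rightarrow>\<^sub>0 'b::comm_monoid_add) =
     (\<Sum>m\<in>Poly_Mapping.keys p. Poly_Mapping.single m (Poly_Mapping.lookup p m))"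
proof (rule poly_mapping_eqI)
  fix k
  have "Poly_Mapping.lookup (\<Sum>m\<in>Poly_Mapping.keys p. Poly_Mapping.single m (Poly_Mapping.lookup p m)) k
     = (\<Sum>m\<in>Poly_Mapping.keys p. if m = k then Poly_Mapping.lookup p m else 0)"
    by (simp add: lookup_sum lookup_single when_def)
  also have "\<dots> = Poly_Mapping.lookup p k"
    by (simp add: in_keys_iff)
  finally show "Poly_Mapping.lookup p k =
      Poly_Mapping.lookup (\<Sum>m\<in>Poly_Mapping.keys p. Poly_Mapping.single m (Poly_Mapping.lookup p m)) k"
    by simp
qed

lemma poly_mapping_single_induct [case_names zero add]:
  fixes p :: "'a \<Rightarrow>\<^sub>0 'b::comm_monoid_add"
  assumes "Q 0"
    and "\<And>m a p. a \<noteq> 0 \<Longrightarrow> m \<notin> Poly_Mapping.keys p \<Longrightarrow> Q p \<Longrightarrow> Q (Poly_Mapping.single m a + p)"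
  shows "Q p"
proof -
  have "Q (\<Sum>m\<in>A. Poly_Mapping.single m (Poly_Mapping.lookup p m))"
    if "finite A" "A \<subseteq> Poly_Mapping.keys p" for A
    using that
  proof (induction A rule: finite_induct)
    case empty
    then show ?case using assms(1) by simp
  next
    case (insert x F)
    have "Poly_Mapping.keys (\<Sum>m\<in>F. Poly_Mapping.single m (Poly_Mapping.lookup p m)) \<subseteq> F"
      using keys_sum[of "\<lambda>m. Poly_Mapping.single m (Poly_Mapping.lookup p m)" F] by auto
    with insert show ?case
      by (simp, intro assms(2)) (auto simp: in_keys_iff)
  qed
  then show ?thesis
    using poly_mapping_sum_single[of p] by (metis finite_keys order_refl)
qed

section \<open>Constants and partial derivatives\<close>

lemma mConst_0 [simp]: "mConst 0 = 0"
  by (simp add: mConst_def)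

lemma mConst_1 [simp]: "mConst 1 = 1"
  by (simp add: mConst_def)

lemma mConst_add: "mConst (a + b) = mConst a + mConst b"
  by (simp add: mConst_def single_add)

lemma mConst_mult: "mConst (a * b) = mConst a * (mConst b :: 'a::comm_ring_1 mpoly)"
  by (simp add: mConst_def mult_single)

lemma mConst_mult_single:
  "mConst a * Poly_Mapping.single m (b::'a::comm_ring_1) = Poly_Mapping.single m (a * b)"
  by (simp add: mConst_def mult_single)

lemma mpderiv_eq_sum_superset:
  assumes "finite S" "Poly_Mapping.keys p \<subseteq> S"
  shows "mpderiv i p = (\<Sum>m\<in>S. Poly_Mapping.single (m - Poly_Mapping.single i 1)
           (of_nat (Poly_Mapping.lookup m i) * Poly_Mapping.lookup p m))"
  unfolding mpderiv_def
  by (rule sum.mono_neutral_left) (use assms in \<open>auto simp: in_keys_iff\<close>)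

lemma mpderiv_0 [simp]: "mpderiv i 0 = 0"
  by (simp add: mpderiv_def)

lemma mpderiv_add: "mpderiv i (p + q) = mpderiv i p + mpderiv i q"
proof -
  let ?S = "Poly_Mapping.keys p \<union> Poly_Mapping.keys q \<union> Poly_Mapping.keys (p + q)"
  show ?thesis
    by (subst (1 2 3) mpderiv_eq_sum_superset[of ?S])
      (auto simp: lookup_add distrib_left single_add sum.distrib)
qed

lemma mpderiv_single:
  "mpderiv i (Poly_Mapping.single m a) =
     Poly_Mapping.single (m - Poly_Mapping.single i 1) (of_nat (Poly_Mapping.lookup m i) * a)"
  by (subst mpderiv_eq_sum_superset[of "{m}"]) auto

lemma mpderiv_single_mult:
  fixes a b :: "'a::comm_ring_1"
  shows "mpderiv i (Poly_Mapping.single m a * Poly_Mapping.single m' b) =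
    mpderiv i (Poly_Mapping.single m a) * Poly_Mapping.single m' b
    + Poly_Mapping.single m a * mpderiv i (Poly_Mapping.single m' b)"
proof -
  let ?e = "Poly_Mapping.single i (1::nat)"
  have left: "mpderiv i (Poly_Mapping.single m a) * Poly_Mapping.single m' b =
      Poly_Mapping.single (m + m' - ?e) (of_nat (Poly_Mapping.lookup m i) * (a * b))"
  proof (cases "Poly_Mapping.lookup m i = 0")
    case False
    then have "m - ?e + m' = m + m' - ?e"
      by (intro poly_mapping_eqI) (auto simp: lookup_add lookup_minus lookup_single when_def)
    then show ?thesis
      by (simp add: mpderiv_single mult_single algebra_simps)
  qed (simp add: mpderiv_single)
  have right: "Poly_Mapping.single m a * mpderiv i (Poly_Mapping.single m' b) =
      Poly_Mapping.single (m + m' - ?e) (of_nat (Poly_Mapping.lookup m' i) * (a * b))"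
  proof (cases "Poly_Mapping.lookup m' i = 0")
    case False
    then have "m + (m' - ?e) = m + m' - ?e"
      by (intro poly_mapping_eqI) (auto simp: lookup_add lookup_minus lookup_single when_def)
    then show ?thesis
      by (simp add: mpderiv_single mult_single algebra_simps)
  qed (simp add: mpderiv_single)
  have "mpderiv i (Poly_Mapping.single m a * Poly_Mapping.single m' b) =
      Poly_Mapping.single (m + m' - ?e) (of_nat (Poly_Mapping.lookup m i) * (a * b))
      + Poly_Mapping.single (m + m' - ?e) (of_nat (Poly_Mapping.lookup m' i) * (a * b))"
    by (simp add: mult_single mpderiv_single lookup_add single_add[symmetric] algebra_simps)
  with left right show ?thesis
    by simp
qed

lemma mpderiv_mult: "mpderiv i (p * q) = mpderiv i p * q + p * mpderiv i (q::'a::comm_ring_1 mpoly)"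
proof (induction p rule: poly_mapping_single_induct)
  case zero
  then show ?case by simp
next
  case (add m a p)
  have "mpderiv i (Poly_Mapping.single m a * q) =
      mpderiv i (Poly_Mapping.single m a) * q + Poly_Mapping.single m a * mpderiv i q"
    by (induction q rule: poly_mapping_single_induct)
      (simp_all add: distrib_left distrib_right mpderiv_add mpderiv_single_mult)
  with add show ?case
    by (simp add: distrib_left distrib_right mpderiv_add algebra_simps)
qed

lemma mpderiv_mConst [simp]: "mpderiv i (mConst c) = 0"
  by (simp add: mConst_def mpderiv_single)

lemma mpderiv_mVar: "mpderiv j (mVar i) = (if i = j then 1 else 0)"
  by (auto simp: mVar_def mpderiv_single lookup_single when_def)

lemma mpderiv_funpow_eq_0:
  assumes "\<forall>m\<in>Poly_Mapping.keys p. Poly_Mapping.lookup m i < k"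
  shows "(mpderiv i ^^ k) p = (0::'a::comm_ring_1 mpoly)"
  using assms
proof (induction k arbitrary: p)
  case 0
  then show ?case by auto
next
  case (Suc k)
  have "Poly_Mapping.lookup m' i < k" if m': "m' \<in> Poly_Mapping.keys (mpderiv i p)" for m'
  proof -
    obtain m where m: "m \<in> Poly_Mapping.keys p" and "m' \<in> Poly_Mapping.keys
        (Poly_Mapping.single (m - Poly_Mapping.single i 1)
           (of_nat (Poly_Mapping.lookup m i) * Poly_Mapping.lookup p m :: 'a))"
      using m' keys_sum[of "\<lambda>m. Poly_Mapping.single (m - Poly_Mapping.single i 1)
          (of_nat (Poly_Mapping.lookup m i) * Poly_Mapping.lookup p m :: 'a)" "Poly_Mapping.keys p"]
      unfolding mpderiv_def by blast
    then have "m' = m - Poly_Mapping.single i 1" "Poly_Mapping.lookup m i \<noteq> 0"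
      by (auto split: if_splits) (metis mult_zero_left of_nat_0 not_gr0)
    with m Suc.prems show ?thesis
      by (auto simp: lookup_minus)
  qed
  then show ?case
    using Suc.IH by (simp add: funpow_Suc_right del: funpow.simps)
qed

lemma funpow_scaled_mpderiv:
  "((\<lambda>p. mConst c * mpderiv i p) ^^ k) p = mConst (c ^ k) * (mpderiv i ^^ k) (p::'a::comm_ring_1 mpoly)"
  by (induction k) (auto simp: mpderiv_mult mConst_mult mult.assoc)

lemma scaled_mpderiv_locally_nilpotent:
  "\<exists>k. ((\<lambda>p. mConst c * mpderiv i p) ^^ k) p = (0::'a::comm_ring_1 mpoly)"
proof
  let ?k = "Suc (\<Sum>m\<in>Poly_Mapping.keys p. Poly_Mapping.lookup m i)"
  have "\<forall>m\<in>Poly_Mapping.keys p. Poly_Mapping.lookup m i < ?k"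
    using member_le_sum[of _ "Poly_Mapping.keys p" "\<lambda>m. Poly_Mapping.lookup m i"]
    by (simp add: le_imp_less_Suc)
  then have "(mpderiv i ^^ ?k) p = 0"
    by (rule mpderiv_funpow_eq_0)
  then show "((\<lambda>p. mConst c * mpderiv i p) ^^ ?k) p = 0"
    by (simp only: funpow_scaled_mpderiv mult_zero_right)
qed

section \<open>Substitution\<close>

definition msubst_monom :: "(nat \<Rightarrow> 'a::comm_ring_1 mpoly) \<Rightarrow> (nat \<Rightarrow>\<^sub>0 nat) \<Rightarrow> 'a mpoly" where
  "msubst_monom s m = (\<Prod>v\<in>Poly_Mapping.keys m. s v ^ Poly_Mapping.lookup m v)"

lemma msubst_monom_superset:
  "finite V \<Longrightarrow> Poly_Mapping.keys m \<subseteq> V \<Longrightarrow>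
     msubst_monom s m = (\<Prod>v\<in>V. s v ^ Poly_Mapping.lookup m v)"
  unfolding msubst_monom_def by (rule prod.mono_neutral_left) (auto simp: in_keys_iff)

lemma msubst_monom_add: "msubst_monom s (m + m') = msubst_monom s m * msubst_monom s m'"
  using keys_add[of m m']
  by (subst (1 2 3) msubst_monom_superset[of "Poly_Mapping.keys m \<union> Poly_Mapping.keys m'"])
    (auto simp: lookup_add power_add prod.distrib)

lemma msubst_eq_sum_superset:
  assumes "finite S" "Poly_Mapping.keys p \<subseteq> S"
  shows "msubst s p = (\<Sum>m\<in>S. mConst (Poly_Mapping.lookup p m) * msubst_monom s m)"
  unfolding msubst_def msubst_monom_def
  by (rule sum.mono_neutral_left) (use assms in \<open>auto simp: in_keys_iff\<close>)

lemma msubst_0 [simp]: "msubst s 0 = 0"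
  by (simp add: msubst_def)

lemma msubst_add: "msubst s (p + q) = msubst s p + msubst s q"
proof -
  let ?S = "Poly_Mapping.keys p \<union> Poly_Mapping.keys q \<union> Poly_Mapping.keys (p + q)"
  show ?thesis
    by (subst (1 2 3) msubst_eq_sum_superset[of ?S])
      (auto simp: lookup_add distrib_right mConst_add sum.distrib)
qed

lemma msubst_single: "msubst s (Poly_Mapping.single m a) = mConst a * msubst_monom s m"
  by (subst msubst_eq_sum_superset[of "{m}"]) auto

lemma msubst_mult: "msubst s (p * q) = msubst s p * msubst s q"
proof (induction p rule: poly_mapping_single_induct)
  case zero
  then show ?case by simp
next
  case (add m a p)
  have "msubst s (Poly_Mapping.single m a * q) = msubst s (Poly_Mapping.single m a) * msubst s q"
    by (induction q rule: poly_mapping_single_induct)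
      (simp_all add: distrib_left msubst_add mult_single msubst_single msubst_monom_add
         mConst_mult algebra_simps)
  with add show ?case
    by (simp add: distrib_right msubst_add)
qed

lemma msubst_1 [simp]: "msubst s 1 = 1"
  using msubst_single[of s 0 1] by (simp add: msubst_monom_def)

interpretation msubst: comm_ring_hom "msubst s"
  by unfold_locales (auto simp: msubst_add msubst_mult)

lemma msubst_mConst [simp]: "msubst s (mConst c) = mConst c"
  by (simp add: mConst_def msubst_single msubst_monom_def)

lemma msubst_mVar [simp]: "msubst s (mVar v) = s v"
  by (simp add: mVar_def msubst_single msubst_monom_def)

lemma mVar_power: "mVar v ^ k = Poly_Mapping.single (Poly_Mapping.single v k) (1::'a::comm_ring_1)"
  by (induction k) (auto simp: mVar_def mult_single single_add[symmetric] add.commute)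

lemma msubst_monom_mVar: "msubst_monom mVar m = Poly_Mapping.single m (1::'a::comm_ring_1)"
proof -
  have "msubst_monom mVar m = Poly_Mapping.single
      (\<Sum>v\<in>Poly_Mapping.keys m. Poly_Mapping.single v (Poly_Mapping.lookup m v)) (1::'a)"
    unfolding msubst_monom_def mVar_power
    by (induction rule: finite_induct[OF finite_keys]) (auto simp: mult_single)
  then show ?thesis
    using poly_mapping_sum_single[of m] by simp
qed

lemma single_eq_mConst_mult_msubst_monom:
  "Poly_Mapping.single m a = mConst a * msubst_monom mVar (m::nat \<Rightarrow>\<^sub>0 nat)"
  by (simp add: msubst_monom_mVar mConst_mult_single)

lemma msubst_mVar_id [simp]: "msubst mVar p = (p::'a::comm_ring_1 mpoly)"
  unfolding msubst_def
  by (subst (3) poly_mapping_sum_single[of p])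
    (simp add: msubst_monom_def[symmetric] single_eq_mConst_mult_msubst_monom)

lemma msubst_msubst: "msubst s (msubst t p) = msubst (\<lambda>v. msubst s (t v)) p"
  unfolding msubst_def[of t] msubst_def[of "\<lambda>v. msubst s (t v)"]
  by (simp add: msubst.hom_sum msubst.hom_mult msubst.hom_prod msubst.hom_power)

section \<open>The polynomial ring in the first \<open>n\<close> variables\<close>

lemma msubst_cong:
  "in_ring n p \<Longrightarrow> (\<And>v. v < n \<Longrightarrow> s v = t v) \<Longrightarrow> msubst s p = msubst t p"
  unfolding msubst_def in_ring_def
  by (intro sum.cong refl arg_cong2[where f="(*)"] prod.cong) (metis lessThan_iff subsetD)

lemma in_ring_0 [simp]: "in_ring n 0"
  by (simp add: in_ring_def)

lemma in_ring_mConst [simp]: "in_ring n (mConst c)"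
  by (simp add: in_ring_def mConst_def)

lemma in_ring_1 [simp]: "in_ring n (1::'a::comm_ring_1 mpoly)"
  using in_ring_mConst[of n "1::'a"] by simp

lemma in_ring_add: "in_ring n p \<Longrightarrow> in_ring n q \<Longrightarrow> in_ring n (p + q)"
  unfolding in_ring_def using keys_add[of p q] by blast

lemma in_ring_mult: "in_ring n p \<Longrightarrow> in_ring n q \<Longrightarrow> in_ring n (p * (q::'a::comm_ring_1 mpoly))"
  unfolding in_ring_def using keys_mult[of p q] keys_add
  by (smt (verit, ccfv_threshold) Un_subset_iff mem_Collect_eq subset_iff)

lemma in_ring_sum: "(\<And>x. x \<in> A \<Longrightarrow> in_ring n (f x)) \<Longrightarrow> in_ring n (sum f A)"
  by (induction A rule: infinite_finite_induct) (auto intro: in_ring_add)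

lemma in_ring_prod:
  "(\<And>x. x \<in> A \<Longrightarrow> in_ring n (f x)) \<Longrightarrow> in_ring n (prod f A :: 'a::comm_ring_1 mpoly)"
  by (induction A rule: infinite_finite_induct) (auto intro: in_ring_mult)

lemma in_ring_power: "in_ring n p \<Longrightarrow> in_ring n (p ^ k :: 'a::comm_ring_1 mpoly)"
  by (induction k) (auto intro: in_ring_mult)

lemma in_ring_mpderiv: "in_ring n p \<Longrightarrow> in_ring n (mpderiv i p)"
  unfolding mpderiv_def
proof (rule in_ring_sum)
  fix m assume "in_ring n p" "m \<in> Poly_Mapping.keys p"
  moreover have "Poly_Mapping.keys (m - Poly_Mapping.single i 1) \<subseteq> Poly_Mapping.keys m"
    by (auto simp: in_keys_iff lookup_minus)
  ultimately show "in_ring n (Poly_Mapping.single (m - Poly_Mapping.single i 1)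
      (of_nat (Poly_Mapping.lookup m i) * Poly_Mapping.lookup p m))"
    by (auto simp: in_ring_def)
qed

lemma in_ring_msubst:
  "in_ring n p \<Longrightarrow> (\<And>v. v < n \<Longrightarrow> in_ring n (s v)) \<Longrightarrow> in_ring n (msubst s p)"
  unfolding msubst_def in_ring_def[of n p]
  by (intro in_ring_sum in_ring_mult in_ring_mConst in_ring_prod in_ring_power) blast

lemma in_ring_induct [consumes 1, case_names mConst mVar add mult]:
  fixes p :: "'a::comm_ring_1 mpoly"
  assumes "in_ring n p"
    and Q_mConst: "\<And>c. Q (mConst c)"
    and Q_mVar: "\<And>v. v < n \<Longrightarrow> Q (mVar v)"
    and Q_add: "\<And>p q. Q p \<Longrightarrow> Q q \<Longrightarrow> Q (p + q)"
    and Q_mult: "\<And>p q. Q p \<Longrightarrow> Q q \<Longrightarrow> Q (p * q)"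
  shows "Q p"
proof -
  have Q_1: "Q 1"
    using Q_mConst[of 1] by simp
  have Q_power: "Q (mVar v ^ k)" if "v < n" for v k
    by (induction k) (simp_all add: Q_1 Q_mult Q_mVar that)
  have Q_monom: "Q (msubst_monom mVar m)" if m: "Poly_Mapping.keys m \<subseteq> {..<n}" for m
  proof -
    have "Q (\<Prod>v\<in>B. mVar v ^ Poly_Mapping.lookup m v)" if "B \<subseteq> Poly_Mapping.keys m" for B
      using finite_subset[OF that finite_keys] that
    proof (induction B rule: finite_induct)
      case empty
      then show ?case by (simp add: Q_1)
    next
      case (insert v B)
      with m show ?case
        by (auto intro!: Q_mult Q_power)
    qed
    then show ?thesis
      unfolding msubst_monom_def by simp
  qed
  have "in_ring n p \<longrightarrow> Q p"
  proof (induction p rule: poly_mapping_single_induct)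
    case zero
    then show ?case using Q_mConst[of 0] by simp
  next
    case (add m a p)
    show ?case
    proof
      assume p_ring: "in_ring n (Poly_Mapping.single m a + p)"
      have "Poly_Mapping.keys (Poly_Mapping.single m a + p) = insert m (Poly_Mapping.keys p)"
        using add.hyps by (auto simp: in_keys_iff lookup_add lookup_single when_def split: if_splits)
      then have "in_ring n p" "Poly_Mapping.keys m \<subseteq> {..<n}"
        using p_ring unfolding in_ring_def by auto
      then show "Q (Poly_Mapping.single m a + p)"
        unfolding single_eq_mConst_mult_msubst_monom
        using add.IH by (intro Q_add Q_mult Q_mConst Q_monom) auto
    qed
  qed
  with assms(1) show ?thesis by simp
qed

lemma mpderiv_msubst:
  assumes "in_ring n p"
  shows "mpderiv j (msubst s p) = (\<Sum>k<n. msubst s (mpderiv k p) * mpderiv j (s k))"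
  using assms
proof (induction p rule: in_ring_induct)
  case (mConst c)
  then show ?case by simp
next
  case (mVar v)
  have "(\<Sum>k<n. msubst s (mpderiv k (mVar v)) * mpderiv j (s k)) =
      (\<Sum>k<n. if k = v then mpderiv j (s v) else 0)"
    by (rule sum.cong) (auto simp: mpderiv_mVar)
  with mVar show ?case by simp
next
  case (add p q)
  then show ?case
    by (simp add: mpderiv_add msubst_add distrib_right sum.distrib)
next
  case (mult p q)
  let ?d = "\<lambda>k. mpderiv j (s k)"
  have "(\<Sum>k<n. msubst s (mpderiv k (p * q)) * ?d k) =
      (\<Sum>k<n. msubst s (mpderiv k p) * ?d k * msubst s q + msubst s p * (msubst s (mpderiv k q) * ?d k))"
    by (rule sum.cong) (simp_all add: mpderiv_mult msubst_add msubst_mult algebra_simps)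
  also have "\<dots> = (\<Sum>k<n. msubst s (mpderiv k p) * ?d k) * msubst s q
      + msubst s p * (\<Sum>k<n. msubst s (mpderiv k q) * ?d k)"
    by (simp add: sum.distrib sum_distrib_left sum_distrib_right)
  also have "\<dots> = mpderiv j (msubst s (p * q))"
    using mult by (simp add: mpderiv_mult msubst_mult)
  finally show ?case by simp
qed

section \<open>Determinants\<close>

lemma permutes_lessThan_less: "p permutes {..<n} \<Longrightarrow> l < n \<Longrightarrow> p l < n"
  using permutes_in_image[of p "{..<n}" l] by simp

lemma mdet_cong: "(\<And>i j. i < n \<Longrightarrow> j < n \<Longrightarrow> M i j = N i j) \<Longrightarrow> mdet n M = mdet n N"
  unfolding mdet_def
  by (intro sum.cong refl arg_cong2[where f="(*)"] prod.cong)
    (auto simp: permutes_lessThan_less)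

lemma mdet_eq_det: "mdet n M = det (mat n n (\<lambda>(i, j). M i j))"
proof -
  have "det (mat n n (\<lambda>(i, j). M i j)) = (\<Sum>p | p permutes {0..<n}.
      signof p * (\<Prod>i = 0..<n. mat n n (\<lambda>(i, j). M i j) $$ (i, p i)))"
    by (rule det_def') simp
  also have "\<dots> = mdet n M"
    unfolding mdet_def atLeast0LessThan
    by (intro sum.cong refl arg_cong2[where f="(*)"] prod.cong) (auto simp: permutes_lessThan_less)
  finally show ?thesis
    by simp
qed

lemma msubst_mdet: "msubst s (mdet n M) = mdet n (\<lambda>i j. msubst s (M i j))"
  unfolding mdet_def
  by (simp add: msubst.hom_sum msubst.hom_mult msubst.hom_prod msubst.hom_of_int)

lemma mdet_row_linear:
  assumes "i < n"
  shows "mdet n (\<lambda>l j. if l = i then (\<Sum>k\<in>S. c k * N k j) else M l j)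
       = (\<Sum>k\<in>S. c k * mdet n (\<lambda>l j. if l = i then N k j else M l j :: 'a::comm_ring_1))"
proof -
  have i: "i \<in> {..<n}" using assms by simp
  let ?R = "\<lambda>p. (\<Prod>l\<in>{..<n} - {i}. M l (p l))"
  have row_sum: "(\<Prod>l<n. if l = i then (\<Sum>k\<in>S. c k * N k (p l)) else M l (p l))
      = (\<Sum>k\<in>S. c k * N k (p i)) * ?R p" for p
    by (subst prod.remove[OF _ i]) (auto intro!: prod.cong)
  have row_k: "(\<Prod>l<n. if l = i then N k (p l) else M l (p l)) = N k (p i) * ?R p" for p k
    by (subst prod.remove[OF _ i]) (auto intro!: prod.cong)
  show ?thesis
    unfolding mdet_def row_sum row_k
    by (simp add: sum_distrib_left sum_distrib_right mult_ac sum.swap[of _ S])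
qed

lemma mdet_identical_rows:
  assumes "i < n" "k < n" "i \<noteq> k" "\<And>j. j < n \<Longrightarrow> M i j = M k j"
  shows "mdet n M = 0"
  unfolding mdet_eq_det
  by (rule det_identical_rows[of _ n i k]) (use assms in \<open>auto intro!: eq_vecI\<close>)

lemma mdet_one: "mdet n (\<lambda>i j. if i = j then 1 else 0) = 1"
proof -
  have "mat n n (\<lambda>(i, j). if i = j then 1 else 0) = (1\<^sub>m n :: 'a::comm_ring_1 mat)"
    by (rule eq_matI) auto
  then show ?thesis
    unfolding mdet_eq_det by simp
qed

lemma mdet_mult:
  "mdet n (\<lambda>i j. \<Sum>k<n. A i k * B k j) = mdet n A * mdet n (B :: nat \<Rightarrow> nat \<Rightarrow> 'a::comm_ring_1)"
proof -
  have "mat n n (\<lambda>(i, j). \<Sum>k<n. A i k * B k j) = mat n n (\<lambda>(i, j). A i j) * mat n n (\<lambda>(i, j). B i j)"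
    by (rule eq_matI) (auto simp: scalar_prod_def atLeast0LessThan intro!: sum.cong)
  then show ?thesis
    unfolding mdet_eq_det by (simp add: det_mult[of _ n])
qed

section \<open>Jacobians\<close>

lemma jac_msubst:
  assumes "\<And>i. i < n \<Longrightarrow> in_ring n (F i)"
  shows "jac n (\<lambda>i. msubst s (F i)) = msubst s (jac n F) * jac n s"
proof -
  have "jac n (\<lambda>i. msubst s (F i)) =
      mdet n (\<lambda>i j. \<Sum>k<n. msubst s (mpderiv k (F i)) * mpderiv j (s k))"
    unfolding jac_def by (rule mdet_cong) (simp add: mpderiv_msubst[OF assms])
  also have "\<dots> = mdet n (\<lambda>i k. msubst s (mpderiv k (F i))) * jac n s"
    unfolding jac_def by (rule mdet_mult)
  also have "mdet n (\<lambda>i k. msubst s (mpderiv k (F i))) = msubst s (jac n F)"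
    by (simp only: jac_def msubst_mdet)
  finally show ?thesis .
qed

lemma jac_update_msubst:
  assumes i: "i < n" and p: "in_ring n p"
  shows "jac n (G(i := msubst G p)) = msubst G (mpderiv i p) * jac n G"
proof -
  define c where "c k = msubst G (mpderiv k p)" for k
  define N where "N k j = mpderiv j (G k)" for k j
  have "jac n (G(i := msubst G p)) = mdet n (\<lambda>l j. if l = i then (\<Sum>k<n. c k * N k j) else N l j)"
    unfolding jac_def by (rule mdet_cong) (simp add: mpderiv_msubst[OF p] c_def N_def mult.commute)
  also have "\<dots> = (\<Sum>k<n. c k * mdet n (\<lambda>l j. if l = i then N k j else N l j))"
    by (rule mdet_row_linear[OF i])
  also have "\<dots> = (\<Sum>k<n. if k = i then c i * jac n G else 0)"
  proof (rule sum.cong)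
    fix k assume k: "k \<in> {..<n}"
    show "c k * mdet n (\<lambda>l j. if l = i then N k j else N l j) = (if k = i then c i * jac n G else 0)"
    proof (cases "k = i")
      case True
      then have "(\<lambda>l j. if l = i then N k j else N l j) = (\<lambda>l j. mpderiv j (G l))"
        by (auto simp: N_def fun_eq_iff)
      with True show ?thesis
        by (simp add: jac_def)
    next
      case False
      have "mdet n (\<lambda>l j. if l = i then N k j else N l j) = 0"
        by (rule mdet_identical_rows[of i n k]) (use i k False in auto)
      with False show ?thesis
        by simp
    qed
  qed simp
  finally show ?thesis
    using i by (simp add: c_def)
qed

section \<open>Polynomial automorphisms\<close>

lemma poly_aut_inv_sym: "poly_aut_inv n F G \<Longrightarrow> poly_aut_inv n G F"
  unfolding poly_aut_inv_def by blast

lemma poly_aut_inv_msubst_cancel: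
  assumes "poly_aut_inv n F G" "in_ring n p"
  shows "msubst G (msubst F p) = p"
proof -
  have "msubst G (msubst F p) = msubst (\<lambda>v. msubst G (F v)) p"
    by (rule msubst_msubst)
  also have "\<dots> = msubst mVar p"
    using assms unfolding poly_aut_inv_def by (intro msubst_cong[OF assms(2)]) auto
  finally show ?thesis
    by simp
qed

lemma poly_aut_inv_jac:
  fixes lam :: "'a::field"
  assumes "poly_aut_inv n F G" "lam \<noteq> 0" "jac n F = mConst lam"
  shows "jac n G = mConst (inverse lam)"
proof -
  have "jac n (\<lambda>i. msubst G (F i)) = mdet n (\<lambda>i j. if i = j then 1 else 0)"
    using assms(1) unfolding jac_def poly_aut_inv_def
    by (intro mdet_cong) (simp add: mpderiv_mVar)
  moreover have "jac n (\<lambda>i. msubst G (F i)) = mConst lam * jac n G"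
    using assms(1,3) unfolding poly_aut_inv_def by (simp add: jac_msubst)
  ultimately have "mConst lam * jac n G = 1"
    by (simp add: mdet_one)
  then have "mConst (inverse lam) * (mConst lam * jac n G) = mConst (inverse lam)"
    by simp
  with assms(2) show ?thesis
    by (simp add: mult.assoc[symmetric] mConst_mult[symmetric])
qed

theorem lemma4:
  fixes n :: nat and \<Phi> \<Psi> :: "nat \<Rightarrow> 'a::field_char_0 mpoly" and lam :: 'a
  assumes "alg_closed TYPE('a)"
    and "poly_aut_inv n \<Phi> \<Psi>"
    and "lam \<noteq> 0" and "jac n \<Phi> = mConst lam"
  defines "\<delta> \<equiv> \<lambda>i P. mConst (inverse lam) * mpderiv i P"
    and "\<Delta> \<equiv> \<lambda>i P. jac n (\<Psi>(i := P))"
  shows "(\<forall>i<n. \<forall>P. in_ring n P \<longrightarrow>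
            \<Delta> i (msubst \<Psi> P) = msubst \<Psi> (\<delta> i P) \<and>
            msubst \<Phi> (\<Delta> i P) = \<delta> i (msubst \<Phi> P))
       \<and> (\<forall>i<n. \<forall>P. in_ring n P \<longrightarrow> (\<exists>k. (\<Delta> i ^^ k) P = 0))"
proof -
  have ring_\<Phi>: "in_ring n (msubst \<Phi> P)" if "in_ring n P" for P
    using assms(2) that unfolding poly_aut_inv_def by (auto intro: in_ring_msubst)
  have ring_\<delta>: "in_ring n (\<delta> i P)" if "in_ring n P" for i P
    using that unfolding \<delta>_def by (simp add: in_ring_mult in_ring_mpderiv)
  have cancel_\<Phi>: "msubst \<Psi> (msubst \<Phi> P) = P" and cancel_\<Psi>: "msubst \<Phi> (msubst \<Psi> P) = P"
    if "in_ring n P" for P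
    using that assms(2) poly_aut_inv_sym by (auto intro: poly_aut_inv_msubst_cancel)
  have conj_\<Psi>: "\<Delta> i (msubst \<Psi> P) = msubst \<Psi> (\<delta> i P)" if "i < n" "in_ring n P" for i P
    using that poly_aut_inv_jac[OF assms(2-4)]
    by (simp add: \<Delta>_def \<delta>_def jac_update_msubst msubst_mult mult.commute)
  have conj_\<Phi>: "msubst \<Phi> (\<Delta> i P) = \<delta> i (msubst \<Phi> P)" if "i < n" "in_ring n P" for i P
    using conj_\<Psi>[OF that(1) ring_\<Phi>] by (simp add: that cancel_\<Phi> cancel_\<Psi> ring_\<delta> ring_\<Phi>)
  have "\<exists>k. (\<Delta> i ^^ k) P = 0" if "i < n" "in_ring n P" for i P
  proof -
    obtain k where "(\<delta> i ^^ k) (msubst \<Phi> P) = 0"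
      using scaled_mpderiv_locally_nilpotent unfolding \<delta>_def by blast
    moreover have "(\<Delta> i ^^ k) (msubst \<Psi> (msubst \<Phi> P)) = msubst \<Psi> ((\<delta> i ^^ k) (msubst \<Phi> P))"
      by (rule funpow_conj[where A = "Collect (in_ring n)"])
        (simp_all add: ring_\<delta> conj_\<Psi> that ring_\<Phi>)
    ultimately show ?thesis
      using cancel_\<Phi>[OF that(2)] by auto
  qed
  with conj_\<Psi> conj_\<Phi> show ?thesis
    by blast
qed

end
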